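(* Let $\mathcal{P}$ be a finite set of propositional variables, let $S \subset (2^{\mathcal{P}})^\ast \times \{0,1\}$ be a finite sample in which no trace carries both labels, let $\Omega$ assign a positive real weight to each trace of $S$ with $\sum_{(u,b)\in S}\Omega(u)=1$, and let $\kappa\in[0,1]$. Consider the procedure (Algorithm 1) that, for $n=1,2,3,\dots$ in increasing order, computes an $\mathrm{LTL}_f$ formula $\varphi_n$ of size $n$ that minimizes the weighted loss $wl(S,\varphi,\Omega)$ among all $\mathrm{LTL}_f$ formulas $\varphi$ of size $n$, and returns the first $\varphi_n$ with $wl(S,\varphi_n,\Omega)\le\kappa$. Then this procedure terminates, and the returned formula $\varphi$ satisfies $wl(S,\varphi,\Omega)\le\kappa$ and is of minimal size among all $\mathrm{LTL}_f$ formulas $\psi$ with $wl(S,\psi,\Omega)\le\kappa$.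
   Context: A trace over $\mathcal{P}$ is a finite sequence $u=a_0a_1\dots a_m$ with $a_i\in 2^{\mathcal{P}}$. $\mathrm{LTL}_f$ formulas are built from propositions $p\in\mathcal{P}$ with the operators $\neg,\lor,\land,\rightarrow$, $\mathbf{X}$ (next), $\mathbf{U}$ (until), $\mathbf{F}$ (eventually, $\mathbf{F}\varphi=\mathit{true}\,\mathbf{U}\,\varphi$) and $\mathbf{G}$ (globally, $\mathbf{G}\varphi=\neg\mathbf{F}\neg\varphi$), interpreted over finite traces with the standard finite-trace semantics of De Giacomo and Vardi; $V(\varphi,u)\in\{0,1\}$ denotes whether trace $u$ satisfies $\varphi$ at position $0$. The size $|\varphi|$ of a formula is the number of its distinct subformulas. A sample is a finite set of pairs $(u,b)$ with $u$ a trace and $b\in\{0,1\}$ its label. The weighted loss is $wl(S,\varphi,\Omega)=\sum_{(u,b)\in S}\Omega(u)\,|V(\varphi,u)-b|$. *)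

theory Defs
  imports Complex_Main
begin

text \<open>LTLf formulas over propositions of type 'p (the finite set of propositional
variables is the universe of a finite type 'p).\<close>

datatype 'p ltlf =
    Prop 'p
  | Not "'p ltlf"
  | Or "'p ltlf" "'p ltlf"
  | And "'p ltlf" "'p ltlf"
  | Imp "'p ltlf" "'p ltlf"
  | Next "'p ltlf"
  | Until "'p ltlf" "'p ltlf"
  | Eventually "'p ltlf"
  | Globally "'p ltlf"

fun sat :: "'p set list \<Rightarrow> nat \<Rightarrow> 'p ltlf \<Rightarrow> bool" where
  "sat u i (Prop p) = (i < length u \<and> p \<in> u ! i)"
| "sat u i (Not f) = (\<not> sat u i f)"
| "sat u i (Or f g) = (sat u i f \<or> sat u i g)"
| "sat u i (And f g) = (sat u i f \<and> sat u i g)"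
| "sat u i (Imp f g) = (sat u i f \<longrightarrow> sat u i g)"
| "sat u i (Next f) = (i + 1 < length u \<and> sat u (i + 1) f)"
| "sat u i (Until f g) =
     (\<exists>j. i \<le> j \<and> j < length u \<and> sat u j g \<and> (\<forall>k. i \<le> k \<and> k < j \<longrightarrow> sat u k f))"
| "sat u i (Eventually f) = (\<exists>j. i \<le> j \<and> j < length u \<and> sat u j f)"
| "sat u i (Globally f) = (\<forall>j. i \<le> j \<and> j < length u \<longrightarrow> sat u j f)"

definition V :: "'p ltlf \<Rightarrow> 'p set list \<Rightarrow> real" where
  "V f u = (if sat u 0 f then 1 else 0)"

fun subformulas :: "'p ltlf \<Rightarrow> 'p ltlf set" where
  "subformulas (Prop p) = {Prop p}"
| "subformulas (Not f) = insert (Not f) (subformulas f)"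
| "subformulas (Or f g) = insert (Or f g) (subformulas f \<union> subformulas g)"
| "subformulas (And f g) = insert (And f g) (subformulas f \<union> subformulas g)"
| "subformulas (Imp f g) = insert (Imp f g) (subformulas f \<union> subformulas g)"
| "subformulas (Next f) = insert (Next f) (subformulas f)"
| "subformulas (Until f g) = insert (Until f g) (subformulas f \<union> subformulas g)"
| "subformulas (Eventually f) = insert (Eventually f) (subformulas f)"
| "subformulas (Globally f) = insert (Globally f) (subformulas f)"

definition fsize :: "'p ltlf \<Rightarrow> nat" where
  "fsize f = card (subformulas f)"

text \<open>Weighted loss; labels b are naturals in {0,1}.\<close>
definition wl :: "('p set list \<times> nat) set \<Rightarrow> 'p ltlf \<Rightarrow> ('p set list \<Rightarrow> real) \<Rightarrow> real" where
  "wl S f \<Omega> = (\<Sum>(u, b)\<in>S. \<Omega> u * \<bar>V f u - real b\<bar>)"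

text \<open>Specification of line "compute phi_n of size n minimizing wl among formulas of size n"
of Algorithm 1: a sequence phi is a valid run if each phi n (n \<ge> 1) is such a minimizer.\<close>
definition valid_run :: "('p set list \<times> nat) set \<Rightarrow> ('p set list \<Rightarrow> real) \<Rightarrow> (nat \<Rightarrow> 'p ltlf) \<Rightarrow> bool" where
  "valid_run S \<Omega> phi \<longleftrightarrow>
     (\<forall>n\<ge>1. fsize (phi n) = n \<and> (\<forall>\<psi>. fsize \<psi> = n \<longrightarrow> wl S (phi n) \<Omega> \<le> wl S \<psi> \<Omega>))"

text \<open>The index at which Algorithm 1 returns: the first n \<ge> 1 with wl(phi n) \<le> kappa.\<close>
definition stop_index :: "('p set list \<times> nat) set \<Rightarrow> ('p set list \<Rightarrow> real) \<Rightarrow> real \<Rightarrow> (nat \<Rightarrow> 'p ltlf) \<Rightarrow> nat" where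
  "stop_index S \<Omega> \<kappa> phi = (LEAST n. n \<ge> 1 \<and> wl S (phi n) \<Omega> \<le> \<kappa>)"

end

theory Submission
  imports Defs
begin

text \<open>Two distinct traces are told apart by \<open>X\<^sup>k p\<close> (same length) or by
\<open>X\<^sup>k F true\<close> (different lengths). Conjunctions of such formulas characterise a
positive trace against all negative ones, and the disjunction of these characteristic formulas
classifies a consistent sample perfectly, so some formula has loss \<open>0 \<le> \<kappa>\<close>. The loss of a
formula only depends on which traces of the sample it satisfies, so it takes finitely many values
and every size \<open>n\<close> has a loss minimiser. If \<open>\<psi>\<close> has loss at most \<kappa>, so has the minimiser of
size \<open>|\<psi>|\<close>; hence the first minimiser with loss at most \<kappa> exists and has minimal size.\<close>

definition true_ltlf :: "'p ltlf" where
  "true_ltlf = Or (Prop undefined) (Not (Prop undefined))"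

lemma sat_true_ltlf [simp]: "sat u i true_ltlf"
  by (simp add: true_ltlf_def)

lemma sat_Next_iter:
  "sat u i ((Next ^^ k) f) \<longleftrightarrow> (k = 0 \<or> i + k < length u) \<and> sat u (i + k) f"
  by (induction k arbitrary: i) (auto simp: add.commute add.left_commute)

lemma sat_Next_iter_Prop [simp]:
  "sat u 0 ((Next ^^ k) (Prop p)) \<longleftrightarrow> k < length u \<and> p \<in> u ! k"
  by (auto simp: sat_Next_iter)

lemma sat_Next_iter_Eventually_true [simp]:
  "sat u 0 ((Next ^^ k) (Eventually true_ltlf)) \<longleftrightarrow> k < length u"
  by (auto simp: sat_Next_iter)

lemma ex_formula_sat_neq:
  assumes "u \<noteq> v"
  shows "\<exists>f. sat u 0 f \<noteq> sat v 0 f"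
proof (cases "length u = length v")
  case True
  then obtain k where k: "k < length u" "u ! k \<noteq> v ! k"
    using assms nth_equalityI by blast
  then obtain p where "p \<in> u ! k \<longleftrightarrow> p \<notin> v ! k" by blast
  then show ?thesis
    using k True by (intro exI[of _ "(Next ^^ k) (Prop p)"]) auto
next
  case False
  then show ?thesis
    by (intro exI[of _ "(Next ^^ (max (length u) (length v) - 1)) (Eventually true_ltlf)"]) auto
qed

lemma ex_formula_distinguishing:
  assumes "u \<noteq> v"
  shows "\<exists>f. sat u 0 f \<and> \<not> sat v 0 f"
proof -
  obtain f where "sat u 0 f \<noteq> sat v 0 f"
    using ex_formula_sat_neq[OF assms] by blast
  then show ?thesis
    by (cases "sat u 0 f") (auto intro: exI[of _ "Not f"])
qed

lemma ex_characteristic_formula: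
  assumes "finite N" "u \<notin> N"
  shows "\<exists>f. sat u 0 f \<and> (\<forall>v\<in>N. \<not> sat v 0 f)"
  using assms
proof (induction N rule: finite_induct)
  case empty
  show ?case by (intro exI[of _ true_ltlf]) simp
next
  case (insert v N)
  then obtain f where "sat u 0 f" "\<forall>w\<in>N. \<not> sat w 0 f" by auto
  moreover obtain g where "sat u 0 g" "\<not> sat v 0 g"
    using ex_formula_distinguishing insert.prems by blast
  ultimately show ?case by (intro exI[of _ "And f g"]) auto
qed

lemma ex_separating_formula:
  assumes "finite P" "finite N" "P \<inter> N = {}"
  shows "\<exists>f. (\<forall>u\<in>P. sat u 0 f) \<and> (\<forall>v\<in>N. \<not> sat v 0 f)"
  using assms
proof (induction P rule: finite_induct)
  case empty
  show ?case by (intro exI[of _ "Not true_ltlf"]) simp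
next
  case (insert u P)
  then obtain f where "\<forall>w\<in>P. sat w 0 f" "\<forall>w\<in>N. \<not> sat w 0 f" by auto
  moreover obtain g where "sat u 0 g" "\<forall>w\<in>N. \<not> sat w 0 g"
    using ex_characteristic_formula insert.prems by blast
  ultimately show ?case by (intro exI[of _ "Or f g"]) auto
qed

lemma wl_eq_0_if_classifies:
  assumes "\<forall>(u, b)\<in>S. b \<in> {0, 1}"
    and "\<forall>(u, b)\<in>S. sat u 0 f \<longleftrightarrow> b = 1"
  shows "wl S f \<Omega> = 0"
  unfolding wl_def
proof (intro sum.neutral ballI)
  fix x assume "x \<in> S"
  then show "(case x of (u, b) \<Rightarrow> \<Omega> u * \<bar>V f u - real b\<bar>) = 0"
    using assms by (cases x) (auto simp: V_def)
qed

lemma ex_wl_eq_0: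
  assumes "finite S"
    and "\<forall>(u, b)\<in>S. b \<in> {0, 1}"
    and "\<forall>u. \<not> ((u, 0) \<in> S \<and> (u, 1) \<in> S)"
  shows "\<exists>f. wl S f \<Omega> = 0"
proof -
  have finite_label: "finite {u. (u, b) \<in> S}" for b
  proof (rule finite_subset)
    show "{u. (u, b) \<in> S} \<subseteq> fst ` S" by force
  qed (simp add: assms(1))
  have "{u. (u, 1) \<in> S} \<inter> {u. (u, 0) \<in> S} = {}"
    using assms(3) by auto
  then obtain f where
    "\<forall>u\<in>{u. (u, 1) \<in> S}. sat u 0 f" "\<forall>v\<in>{u. (u, 0) \<in> S}. \<not> sat v 0 f"
    using ex_separating_formula[OF finite_label finite_label] by blast
  with assms(2) have "\<forall>(u, b)\<in>S. sat u 0 f \<longleftrightarrow> b = 1"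
    by fastforce
  with assms(2) show ?thesis
    by (blast intro: wl_eq_0_if_classifies)
qed

lemma finite_range_wl:
  assumes "finite S"
  shows "finite (range (\<lambda>f. wl S f \<Omega>))"
proof -
  let ?loss = "\<lambda>T. \<Sum>x\<in>S. \<Omega> (fst x) * \<bar>(if x \<in> T then 1 else 0) - real (snd x)\<bar>"
  have wl_eq: "wl S f \<Omega> = ?loss {x\<in>S. sat (fst x) 0 f}" for f
    unfolding wl_def V_def by (intro sum.cong) auto
  have "range (\<lambda>f. wl S f \<Omega>) \<subseteq> ?loss ` Pow S"
  proof (rule image_subsetI)
    fix f
    show "wl S f \<Omega> \<in> ?loss ` Pow S"
      using wl_eq by (rule image_eqI) auto
  qed
  moreover have "finite (?loss ` Pow S)"
    using assms by (intro finite_imageI) simp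
  ultimately show ?thesis
    by (rule finite_subset)
qed

lemma ex_wl_minimizer:
  assumes "finite S" "A \<noteq> {}"
  shows "\<exists>f\<in>A. \<forall>\<psi>\<in>A. wl S f \<Omega> \<le> wl S \<psi> \<Omega>"
proof -
  have "finite ((\<lambda>f. wl S f \<Omega>) ` A)"
    using finite_range_wl[OF assms(1)] by (rule finite_subset[rotated]) auto
  from ex_min_if_finite[OF this] assms(2) show ?thesis
    by (auto simp: not_less)
qed

lemma size_le_if_mem_subformulas: "g \<in> subformulas f \<Longrightarrow> size g \<le> size f"
  by (induction f) auto

lemma finite_subformulas: "finite (subformulas f)"
  by (induction f) auto

lemma subformulas_self: "f \<in> subformulas f"
  by (cases f) simp_all

lemma fsize_ge_1: "1 \<le> fsize f"
  unfolding fsize_def using subformulas_self finite_subformulas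
  by (metis One_nat_def Suc_leI card_gt_0_iff empty_iff)

lemma fsize_Next_iter: "fsize ((Next ^^ k) f) = k + fsize f"
proof (induction k)
  case 0
  show ?case by simp
next
  case (Suc k)
  have "Next ((Next ^^ k) f) \<notin> subformulas ((Next ^^ k) f)"
    using size_le_if_mem_subformulas by fastforce
  with Suc show ?case
    by (simp add: fsize_def finite_subformulas)
qed

lemma ex_fsize_eq: "1 \<le> n \<Longrightarrow> \<exists>f :: 'p ltlf. fsize f = n"
  by (intro exI[of _ "(Next ^^ (n - 1)) (Prop undefined)"])
    (simp add: fsize_Next_iter, simp add: fsize_def)

lemma ex_valid_run:
  assumes "finite S"
  shows "\<exists>phi. valid_run S \<Omega> phi"
proof -
  have "\<exists>f. 1 \<le> n \<longrightarrow> fsize f = n \<and> (\<forall>\<psi>. fsize \<psi> = n \<longrightarrow> wl S f \<Omega> \<le> wl S \<psi> \<Omega>)" for n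
    using ex_wl_minimizer[OF assms, of "{f. fsize f = n}"] ex_fsize_eq[of n] by auto
  then obtain phi where
    "\<forall>n. 1 \<le> n \<longrightarrow> fsize (phi n) = n \<and> (\<forall>\<psi>. fsize \<psi> = n \<longrightarrow> wl S (phi n) \<Omega> \<le> wl S \<psi> \<Omega>)"
    by metis
  then show ?thesis
    unfolding valid_run_def by blast
qed

lemma valid_run_wl_le:
  assumes "valid_run S \<Omega> phi"
  shows "wl S (phi (fsize \<psi>)) \<Omega> \<le> wl S \<psi> \<Omega>"
  using assms fsize_ge_1 unfolding valid_run_def by blast

lemma
  assumes "valid_run S \<Omega> phi" "wl S \<psi> \<Omega> \<le> \<kappa>"
  shows valid_run_stop_index: "1 \<le> stop_index S \<Omega> \<kappa> phi \<and> wl S (phi (stop_index S \<Omega> \<kappa> phi)) \<Omega> \<le> \<kappa>"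
    and stop_index_le_fsize: "stop_index S \<Omega> \<kappa> phi \<le> fsize \<psi>"
proof -
  have "1 \<le> fsize \<psi> \<and> wl S (phi (fsize \<psi>)) \<Omega> \<le> \<kappa>"
    using valid_run_wl_le[OF assms(1)] assms(2) fsize_ge_1 by (meson order_trans)
  then show "1 \<le> stop_index S \<Omega> \<kappa> phi \<and> wl S (phi (stop_index S \<Omega> \<kappa> phi)) \<Omega> \<le> \<kappa>"
    and "stop_index S \<Omega> \<kappa> phi \<le> fsize \<psi>"
    unfolding stop_index_def by (fact LeastI, fact Least_le)
qed

theorem theorem1:
  fixes S :: "('p::finite set list \<times> nat) set"
    and \<Omega> :: "'p set list \<Rightarrow> real"
    and \<kappa> :: real
  assumes "finite S"
    and "\<forall>(u, b)\<in>S. u \<noteq> [] \<and> b \<in> {0, 1}"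
    and "\<forall>u. \<not> ((u, 0) \<in> S \<and> (u, 1) \<in> S)"
    and "\<forall>(u, b)\<in>S. \<Omega> u > 0"
    and "(\<Sum>(u, b)\<in>S. \<Omega> u) = 1"
    and "0 \<le> \<kappa>" and "\<kappa> \<le> 1"
  shows "(\<exists>phi. valid_run S \<Omega> phi) \<and>
         (\<forall>phi. valid_run S \<Omega> phi \<longrightarrow>
            (\<exists>n\<ge>1. wl S (phi n) \<Omega> \<le> \<kappa>) \<and>
            wl S (phi (stop_index S \<Omega> \<kappa> phi)) \<Omega> \<le> \<kappa> \<and>
            (\<forall>\<psi>. wl S \<psi> \<Omega> \<le> \<kappa> \<longrightarrow> fsize (phi (stop_index S \<Omega> \<kappa> phi)) \<le> fsize \<psi>))"
proof (intro conjI allI impI)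
  show "\<exists>phi. valid_run S \<Omega> phi"
    using ex_valid_run[OF assms(1)] .
  have "\<forall>(u, b)\<in>S. b \<in> {0, 1}"
    using assms(2) by auto
  then obtain f0 where "wl S f0 \<Omega> = 0"
    using ex_wl_eq_0 assms(1,3) by blast
  with assms(6) have f0: "wl S f0 \<Omega> \<le> \<kappa>" by simp
  fix phi assume run: "valid_run S \<Omega> phi"
  show "\<exists>n\<ge>1. wl S (phi n) \<Omega> \<le> \<kappa>" "wl S (phi (stop_index S \<Omega> \<kappa> phi)) \<Omega> \<le> \<kappa>"
    using valid_run_stop_index[OF run f0] by blast+
  fix \<psi> assume "wl S \<psi> \<Omega> \<le> \<kappa>"
  moreover have "fsize (phi (stop_index S \<Omega> \<kappa> phi)) = stop_index S \<Omega> \<kappa> phi"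
    using run valid_run_stop_index[OF run f0] unfolding valid_run_def by blast
  ultimately show "fsize (phi (stop_index S \<Omega> \<kappa> phi)) \<le> fsize \<psi>"
    using stop_index_le_fsize[OF run] by simp
qed

end
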